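(* Let $r:\mathbb{R}^2\to\mathbb{R}$ be a positive reference image, $\phi:\mathbb{R}^2\to\mathbb{R}$ a signed image with Radon transform $\widetilde\phi$ and RSCDT $\widehat\phi$ with respect to $r$. Let $H_R\subseteq\mathcal{G}_R$ be a convex subgroup of $(\mathcal{G}_R,\star)$. Then $\widehat{\mathbb{S}}_{\phi,H_R}:=\{\widehat{\phi}_g:\phi_g\in\mathbb{S}_{\phi,H_R}\}$ is convex, where $\mathbb{S}_{\phi,H_R}:=\{\phi_g=\mathcal{R}^{-1}((g^\theta)'\,\widetilde\phi\circ g^\theta):\ g\in H_R\}$.
   Context: Radon transform: $\widetilde s(t,\theta)=\mathcal{R}(s)(t,\theta)=\int_{\mathbb{R}^2}s(\mathbf{x})\delta(t-\mathbf{x}\cdot\xi_\theta)\,d\mathbf{x}$, $\xi_\theta=(\cos\theta,\sin\theta)^T$; $\mathcal{R}^{-1}$ its inverse. $\mathcal{G}_R$ is the set of families $g=(g^\theta)_{\theta\in[0,\pi]}$ of strictly increasing (differentiable) bijections $g^\theta:\mathbb{R}\to\mathbb{R}$, with group operation $(g\star h)(\cdot,\theta)=(g^\theta\circ h^\theta)(\cdot)$. A convex subgroup is a subset $H_R$ that is a convex set (under pointwise linear combinations) and a group under $\star$. $(\widetilde\phi\circ g^\theta)(t)=\widetilde\phi(g^\theta(t),\theta)$. For nonnegative integrable $p$, $F_p(x)=\int_{-\infty}^x p$, $F^\dagger(y)=\inf\{x:F(x)>y\}$. SCDT of signed $f$ w.r.t. positive $\rho$: $f^\pm$ positive/negative parts,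 $(f^\pm)^\star=F^\dagger_{f^\pm/\|f^\pm\|_1}\circ F_{\rho/\|\rho\|_1}$ (or $0$ if $f^\pm=0$), $\mathrm{SCDT}_\rho(f)=((f^+)^\star,\|f^+\|_1,(f^-)^\star,\|f^-\|_1)$. RSCDT of $s$ w.r.t. $r$: $\widehat s(\cdot,\theta)=\mathrm{SCDT}_{\widetilde r(\cdot,\theta)}(\widetilde s(\cdot,\theta))$ for each $\theta$; convex combinations of RSCDTs are taken componentwise. *)

theory Defs
  imports "HOL-Analysis.Analysis"
begin

type_synonym image = "real \<times> real \<Rightarrow> real"
type_synonym family = "real \<Rightarrow> real \<Rightarrow> real"   (* g \<theta> t = g^\<theta>(t) *)
type_synonym scdt_val = "(real \<Rightarrow> real) \<times> real \<times> (real \<Rightarrow> real) \<times> real"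

text \<open>Radon transform: integral of s over the line {x. x \<bullet> \<xi>_\<theta> = t},
  parametrised as t \<xi>_\<theta> + u \<xi>_\<theta>^\<bottom>.\<close>
definition radon :: "image \<Rightarrow> real \<Rightarrow> real \<Rightarrow> real" where
  "radon s t \<theta> = (LINT u|lborel. s (t * cos \<theta> - u * sin \<theta>, t * sin \<theta> + u * cos \<theta>))"

definition radon_inv :: "(real \<Rightarrow> real \<Rightarrow> real) \<Rightarrow> image" where
  "radon_inv h = (SOME s. integrable lborel s \<and> (\<forall>\<theta>\<in>{0..pi}. \<forall>t. radon s t \<theta> = h t \<theta>))"

definition pos_part :: "(real \<Rightarrow> real) \<Rightarrow> real \<Rightarrow> real" where
  "pos_part f = (\<lambda>x. max (f x) 0)"

definition neg_part :: "(real \<Rightarrow> real) \<Rightarrow> real \<Rightarrow> real" where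
  "neg_part f = (\<lambda>x. max (- f x) 0)"

definition L1norm :: "(real \<Rightarrow> real) \<Rightarrow> real" where
  "L1norm f = (LINT x|lborel. \<bar>f x\<bar>)"

definition cdf :: "(real \<Rightarrow> real) \<Rightarrow> real \<Rightarrow> real" where
  "cdf p x = (LINT y:{..x}|lborel. p y)"

definition gen_inv :: "(real \<Rightarrow> real) \<Rightarrow> real \<Rightarrow> real" where
  "gen_inv F y = Inf {x. F x > y}"

definition cdt_star :: "(real \<Rightarrow> real) \<Rightarrow> (real \<Rightarrow> real) \<Rightarrow> real \<Rightarrow> real" where
  "cdt_star \<rho> h = (if L1norm h = 0 then (\<lambda>_. 0)
      else gen_inv (cdf (\<lambda>x. h x / L1norm h)) \<circ> cdf (\<lambda>x. \<rho> x / L1norm \<rho>))"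

definition SCDT :: "(real \<Rightarrow> real) \<Rightarrow> (real \<Rightarrow> real) \<Rightarrow> scdt_val" where
  "SCDT \<rho> f = (cdt_star \<rho> (pos_part f), L1norm (pos_part f),
                cdt_star \<rho> (neg_part f), L1norm (neg_part f))"

definition RSCDT :: "image \<Rightarrow> image \<Rightarrow> real \<Rightarrow> scdt_val" where
  "RSCDT r s = (\<lambda>\<theta>. if \<theta> \<in> {0..pi} then SCDT (\<lambda>t. radon r t \<theta>) (\<lambda>t. radon s t \<theta>)
                    else ((\<lambda>_. 0), 0, (\<lambda>_. 0), 0))"

definition scdt_comb :: "real \<Rightarrow> scdt_val \<Rightarrow> scdt_val \<Rightarrow> scdt_val" where
  "scdt_comb l A B = (case A of (a1, a2, a3, a4) \<Rightarrow> case B of (b1, b2, b3, b4) \<Rightarrow>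
     ((\<lambda>x. l * a1 x + (1 - l) * b1 x), l * a2 + (1 - l) * b2,
      (\<lambda>x. l * a3 x + (1 - l) * b3 x), l * a4 + (1 - l) * b4))"

definition rscdt_comb :: "real \<Rightarrow> (real \<Rightarrow> scdt_val) \<Rightarrow> (real \<Rightarrow> scdt_val) \<Rightarrow> real \<Rightarrow> scdt_val" where
  "rscdt_comb l A B = (\<lambda>\<theta>. scdt_comb l (A \<theta>) (B \<theta>))"

definition rscdt_convex :: "(real \<Rightarrow> scdt_val) set \<Rightarrow> bool" where
  "rscdt_convex S \<longleftrightarrow> (\<forall>A\<in>S. \<forall>B\<in>S. \<forall>l\<in>{0..1}. rscdt_comb l A B \<in> S)"

definition GR :: "family set" where
  "GR = {g. (\<forall>\<theta>\<in>{0..pi}. strict_mono (g \<theta>) \<and> bij (g \<theta>) \<and> (\<forall>t. g \<theta> differentiable (at t)))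
           \<and> (\<forall>\<theta>. \<theta> \<notin> {0..pi} \<longrightarrow> g \<theta> = id)}"

definition fam_comp :: "family \<Rightarrow> family \<Rightarrow> family" (infixl "\<star>" 70) where
  "g \<star> h = (\<lambda>\<theta>. g \<theta> \<circ> h \<theta>)"

definition fam_id :: family where
  "fam_id = (\<lambda>\<theta>. id)"

definition fam_inv :: "family \<Rightarrow> family" where
  "fam_inv g = (\<lambda>\<theta>. inv (g \<theta>))"

definition convex_subgroup :: "family set \<Rightarrow> bool" where
  "convex_subgroup H \<longleftrightarrow> H \<subseteq> GR
     \<and> (\<forall>g\<in>H. \<forall>h\<in>H. \<forall>l\<in>{0..1::real}. (\<lambda>\<theta> t. l * g \<theta> t + (1 - l) * h \<theta> t) \<in> H)
     \<and> fam_id \<in> H \<and> (\<forall>g\<in>H. \<forall>h\<in>H. g \<star> h \<in> H) \<and> (\<forall>g\<in>H. fam_inv g \<in> H)"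

definition radon_act :: "family \<Rightarrow> image \<Rightarrow> real \<Rightarrow> real \<Rightarrow> real" where
  "radon_act g \<phi> t \<theta> = deriv (g \<theta>) t * radon \<phi> (g \<theta> t) \<theta>"

definition phi_g :: "image \<Rightarrow> family \<Rightarrow> image" where
  "phi_g \<phi> g = radon_inv (radon_act g \<phi>)"

definition model_set :: "image \<Rightarrow> family set \<Rightarrow> image set" where
  "model_set \<phi> H = {phi_g \<phi> g | g. g \<in> H}"

end

theory Submission
  imports Defs
begin

(* For a strictly increasing differentiable bijection G, the substitution rule turns
   t \<mapsto> G'(t) f(G t) into a signal with the same positive and negative masses whose
   cumulative distribution functions are those of f composed with G. The generalised inverse
   of F \<circ> G is G^-1 \<circ> F^\<dagger>, so each CDT component of \<phi>_g is the corresponding component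
   of \<phi> followed by (g^\<theta>)^-1. Hence the RSCDT of \<phi>_g depends affinely on the inverse
   family g^-1, and a convex subgroup is closed under inverses and convex combinations. *)

lemma mono_imp_deriv_nonneg:
  fixes G :: "real \<Rightarrow> real"
  assumes "mono G" "G differentiable (at t)"
  shows "deriv G t \<ge> 0"
  using assms mono_on_imp_deriv_nonneg[of UNIV G "deriv G t" t]
  by (simp add: DERIV_deriv_iff_real_differentiable)

lemma borel_measurable_deriv:
  fixes G :: "real \<Rightarrow> real"
  assumes "\<And>t. G differentiable (at t)"
  shows "deriv G \<in> borel_measurable borel"
proof (rule borel_measurable_LIMSEQ_real)
  fix x :: real
  have "DERIV G x :> deriv G x"
    using assms DERIV_deriv_iff_real_differentiable by blast
  moreover have "filterlim (\<lambda>n::nat. 1 / real (Suc n)) (at 0) sequentially"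
    unfolding filterlim_at
    by (auto intro!: LIMSEQ_Suc[OF lim_const_over_n] simp del: of_nat_Suc)
  ultimately show "(\<lambda>n. (G (x + 1 / real (Suc n)) - G x) / (1 / real (Suc n))) \<longlonglongrightarrow> deriv G x"
    using filterlim_compose unfolding DERIV_def by fastforce
next
  fix n :: nat
  have "continuous_on UNIV G"
    using assms by (simp add: continuous_at_imp_continuous_on differentiable_imp_continuous_within)
  then have "G \<in> borel_measurable borel"
    using borel_measurable_continuous_onI by blast
  then show "(\<lambda>x. (G (x + 1 / real (Suc n)) - G x) / (1 / real (Suc n))) \<in> borel_measurable borel"
    by measurable
qed

lemma set_integrable_lborel_iff_absolutely_integrable:
  fixes f :: "real \<Rightarrow> real"
  assumes "f \<in> borel_measurable borel" "T \<in> sets borel"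
  shows "set_integrable lborel T f \<longleftrightarrow> f absolutely_integrable_on T"
proof -
  have "(\<lambda>x. indicator T x *\<^sub>R f x) \<in> lborel \<rightarrow>\<^sub>M borel"
    using assms by measurable
  then show ?thesis
    unfolding set_integrable_def absolutely_integrable_on_def by (simp add: integrable_completion)
qed

lemma set_integral_deriv_comp:
  fixes G q :: "real \<Rightarrow> real"
  assumes G: "strict_mono G" "\<And>t. G differentiable (at t)"
    and q: "q \<in> borel_measurable borel"
    and T: "T \<in> sets borel" "G ` T \<in> sets borel"
  shows "(LINT t:T|lborel. deriv G t * q (G t)) = (LINT x:G ` T|lborel. q x)"
proof -
  have "G \<in> borel_measurable borel"
    using G(2) by (intro borel_measurable_continuous_onI)
      (simp add: continuous_at_imp_continuous_on differentiable_imp_continuous_within)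
  then have meas: "(\<lambda>t. deriv G t * q (G t)) \<in> borel_measurable borel"
    using q borel_measurable_deriv[OF G(2)] by measurable
  have "\<bar>deriv G t\<bar> = deriv G t" for t
    using mono_imp_deriv_nonneg[OF strict_mono_mono] G by simp
  moreover have "(G has_field_derivative deriv G t) (at t within T)" for t
    using G(2) DERIV_deriv_iff_real_differentiable has_field_derivative_at_within by blast
  moreover have "inj_on G T"
    using G(1) strict_mono_imp_inj_on inj_on_subset by blast
  ultimately have cov: "(\<lambda>t. deriv G t * q (G t)) absolutely_integrable_on T
      \<and> integral T (\<lambda>t. deriv G t * q (G t)) = b
    \<longleftrightarrow> q absolutely_integrable_on G ` T \<and> integral (G ` T) q = b" for b
    using has_absolute_integral_change_of_variables_1'[of T G "deriv G" q b] T by simp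
  have int_iff: "set_integrable lborel T (\<lambda>t. deriv G t * q (G t)) \<longleftrightarrow> set_integrable lborel (G ` T) q"
    using cov set_integrable_lborel_iff_absolutely_integrable meas q T by blast
  show ?thesis
  proof (cases "set_integrable lborel (G ` T) q")
    case True
    then show ?thesis
      using int_iff cov set_borel_integral_eq_integral(2)
        set_integrable_lborel_iff_absolutely_integrable[OF q T(2)] by metis
  next
    case False
    then show ?thesis
      using int_iff by (simp add: set_lebesgue_integral_def set_integrable_def not_integrable_integral_eq)
  qed
qed

lemma cInf_image_strict_mono_surj:
  fixes K :: "'a::conditionally_complete_linorder \<Rightarrow> 'b::conditionally_complete_linorder"
  assumes K: "strict_mono K" "surj K" and S: "S \<noteq> {}" "bdd_below S"
  shows "Inf (K ` S) = K (Inf S)"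
proof (rule cInf_eq_non_empty)
  show "K ` S \<noteq> {}" using S(1) by simp
  show "K (Inf S) \<le> y" if "y \<in> K ` S" for y
    using that S(2) K(1) by (auto simp: strict_mono_less_eq cInf_lower)
  show "b \<le> K (Inf S)" if lower: "\<And>y. y \<in> K ` S \<Longrightarrow> b \<le> y" for b
  proof -
    obtain a where b: "b = K a" using K(2) by (metis surjD)
    have "a \<le> x" if "x \<in> S" for x
      using lower[of "K x"] that K(1) b by (simp add: strict_mono_less_eq)
    then have "a \<le> Inf S" using S(1) by (simp add: cInf_greatest)
    then show ?thesis using K(1) b by (simp add: strict_mono_less_eq)
  qed
qed

text \<open>\<open>Inf\<close> of \<open>UNIV\<close> or \<open>{}\<close> is an unspecified real; leaving these two cases untouched makes
  \<open>Inf_mapped K S\<close> affine in \<open>K\<close>.\<close>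

definition Inf_mapped :: "(real \<Rightarrow> real) \<Rightarrow> real set \<Rightarrow> real" where
  "Inf_mapped K S = (if S = UNIV \<or> S = {} then Inf S else K (Inf S))"

lemma Inf_mapped_affine:
  "Inf_mapped (\<lambda>x. l * K1 x + (1 - l) * K2 x) S = l * Inf_mapped K1 S + (1 - l) * Inf_mapped K2 S"
  unfolding Inf_mapped_def by (simp add: algebra_simps)

lemma gen_inv_comp_strict_mono:
  fixes F G :: "real \<Rightarrow> real"
  assumes G: "strict_mono G" "surj G" and F: "mono F"
  shows "gen_inv (F \<circ> G) y = Inf_mapped (inv G) {z. y < F z}"
proof -
  define S where "S = {z. y < F z}"
  have inj: "inj G"
    using G(1) strict_mono_imp_inj_on by blast
  have inv_G: "strict_mono (inv G)" "surj (inv G)"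
    using strict_mono_inv[OF G] inv_f_f[OF inj] inj_imp_surj_inv[OF inj] by blast+
  have GI: "G (inv G z) = z" for z
    using G(2) by (simp add: surj_f_inv_f)
  have "{x. y < F (G x)} = inv G ` S"
  proof (intro equalityI subsetI)
    show "x \<in> inv G ` S" if "x \<in> {x. y < F (G x)}" for x
      using that inv_f_f[OF inj] by (metis S_def image_eqI mem_Collect_eq)
  qed (auto simp: S_def GI)
  then have gen_inv_S: "gen_inv (F \<circ> G) y = Inf (inv G ` S)"
    by (simp add: gen_inv_def)
  show ?thesis
  proof (cases "S = UNIV \<or> S = {}")
    case True
    then show ?thesis
      using inv_G(2) gen_inv_S by (auto simp: Inf_mapped_def S_def[symmetric])
  next
    case False
    then obtain z0 where "z0 \<notin> S" by blast
    then have "z0 \<le> z" if "z \<in> S" for z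
      using that F by (fastforce simp: S_def dest: monoD[of F z z0])
    then have "bdd_below S" by (rule bdd_belowI)
    then show ?thesis
      using False gen_inv_S cInf_image_strict_mono_surj[OF inv_G]
      by (simp add: Inf_mapped_def S_def[symmetric])
  qed
qed

lemma image_atMost_strict_mono_surj:
  fixes G :: "'a::linorder \<Rightarrow> 'b::linorder"
  assumes "strict_mono G" "surj G"
  shows "G ` {..t} = {..G t}"
proof (intro equalityI subsetI)
  show "y \<in> G ` {..t}" if "y \<in> {..G t}" for y
  proof -
    obtain x where "y = G x" using assms(2) by (metis surjD)
    then show ?thesis using that assms(1) by (auto simp: strict_mono_less_eq)
  qed
qed (use assms(1) in \<open>auto simp: strict_mono_less_eq\<close>)

lemma
  fixes G p :: "real \<Rightarrow> real"
  assumes G: "strict_mono G" "surj G" "\<And>t. G differentiable (at t)"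
    and p: "p \<in> borel_measurable borel"
  shows L1norm_deriv_comp: "L1norm (\<lambda>t. deriv G t * p (G t)) = L1norm p"
    and cdf_deriv_comp: "cdf (\<lambda>t. deriv G t * p (G t)) t = cdf p (G t)"
proof -
  have "\<bar>deriv G t * p (G t)\<bar> = deriv G t * \<bar>p (G t)\<bar>" for t
    using mono_imp_deriv_nonneg[OF strict_mono_mono] G by (simp add: abs_mult)
  then show "L1norm (\<lambda>t. deriv G t * p (G t)) = L1norm p"
    using set_integral_deriv_comp[OF G(1,3), of "\<lambda>x. \<bar>p x\<bar>" UNIV] p G(2)
    by (simp add: L1norm_def set_lebesgue_integral_def)
  show "cdf (\<lambda>t. deriv G t * p (G t)) t = cdf p (G t)"
    using set_integral_deriv_comp[OF G(1,3) p, of "{..t}"] image_atMost_strict_mono_surj[OF G(1,2)]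
    by (simp add: cdf_def)
qed

lemma cdf_mono:
  fixes q :: "real \<Rightarrow> real"
  assumes "integrable lborel q" "\<And>x. q x \<ge> 0"
  shows "mono (cdf q)"
proof
  fix x y :: real
  assume "x \<le> y"
  then show "cdf q x \<le> cdf q y"
    unfolding cdf_def set_lebesgue_integral_def using assms
    by (intro integral_mono integrable_mult_indicator) (auto split: split_indicator)
qed

definition cdt_star_mapped :: "(real \<Rightarrow> real) \<Rightarrow> (real \<Rightarrow> real) \<Rightarrow> (real \<Rightarrow> real) \<Rightarrow> real \<Rightarrow> real" where
  "cdt_star_mapped K \<rho> p t = (if L1norm p = 0 then 0 else
     Inf_mapped K {z. cdf (\<lambda>x. \<rho> x / L1norm \<rho>) t < cdf (\<lambda>x. p x / L1norm p) z})"

lemma cdt_star_deriv_comp: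
  fixes G p \<rho> :: "real \<Rightarrow> real"
  assumes G: "strict_mono G" "surj G" "\<And>t. G differentiable (at t)"
    and p: "p \<in> borel_measurable borel" "\<And>x. p x \<ge> 0"
  shows "cdt_star \<rho> (\<lambda>t. deriv G t * p (G t)) = cdt_star_mapped (inv G) \<rho> p"
proof (cases "L1norm p = 0")
  case True
  then show ?thesis
    using L1norm_deriv_comp[OF G p(1)] by (simp add: cdt_star_def cdt_star_mapped_def fun_eq_iff)
next
  case False
  define N where "N = L1norm p"
  have "integrable lborel p"
    using False p(2) not_integrable_integral_eq by (force simp: L1norm_def)
  moreover have "N \<ge> 0"
    by (simp add: N_def L1norm_def)
  ultimately have mono: "mono (cdf (\<lambda>x. p x / N))"
    using p(2) by (intro cdf_mono) auto
  have "cdf (\<lambda>t. deriv G t * p (G t) / N) = cdf (\<lambda>x. p x / N) \<circ> G"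
    using cdf_deriv_comp[OF G, of "\<lambda>x. p x / N"] p(1) by (simp add: fun_eq_iff)
  then have "cdt_star \<rho> (\<lambda>t. deriv G t * p (G t))
      = gen_inv (cdf (\<lambda>x. p x / N) \<circ> G) \<circ> cdf (\<lambda>x. \<rho> x / L1norm \<rho>)"
    using False L1norm_deriv_comp[OF G p(1)] by (simp add: cdt_star_def N_def)
  then show ?thesis
    using False mono by (simp add: gen_inv_comp_strict_mono[OF G(1,2)] cdt_star_mapped_def N_def fun_eq_iff)
qed

definition scdt_mapped :: "(real \<Rightarrow> real) \<Rightarrow> (real \<Rightarrow> real) \<Rightarrow> (real \<Rightarrow> real) \<Rightarrow> scdt_val" where
  "scdt_mapped K \<rho> f = (cdt_star_mapped K \<rho> (pos_part f), L1norm (pos_part f),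
                        cdt_star_mapped K \<rho> (neg_part f), L1norm (neg_part f))"

lemma SCDT_deriv_comp:
  fixes G f \<rho> :: "real \<Rightarrow> real"
  assumes G: "strict_mono G" "surj G" "\<And>t. G differentiable (at t)"
    and f: "f \<in> borel_measurable borel"
  shows "SCDT \<rho> (\<lambda>t. deriv G t * f (G t)) = scdt_mapped (inv G) \<rho> f"
proof -
  have "deriv G t \<ge> 0" for t
    using mono_imp_deriv_nonneg[OF strict_mono_mono] G by simp
  then have "pos_part (\<lambda>t. deriv G t * f (G t)) = (\<lambda>t. deriv G t * pos_part f (G t))"
    "neg_part (\<lambda>t. deriv G t * f (G t)) = (\<lambda>t. deriv G t * neg_part f (G t))"
    by (simp_all add: pos_part_def neg_part_def max_mult_distrib_left)
  moreover have "pos_part f \<in> borel_measurable borel" "neg_part f \<in> borel_measurable borel"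
    using f unfolding pos_part_def neg_part_def by measurable
  moreover have "pos_part f x \<ge> 0" "neg_part f x \<ge> 0" for x
    by (simp_all add: pos_part_def neg_part_def)
  ultimately show ?thesis
    using cdt_star_deriv_comp[OF G] L1norm_deriv_comp[OF G]
    by (simp add: SCDT_def scdt_mapped_def)
qed

lemma scdt_comb_scdt_mapped:
  "scdt_comb l (scdt_mapped K1 \<rho> f) (scdt_mapped K2 \<rho> f) = scdt_mapped (\<lambda>x. l * K1 x + (1 - l) * K2 x) \<rho> f"
  by (simp add: scdt_comb_def scdt_mapped_def cdt_star_mapped_def Inf_mapped_affine fun_eq_iff)
    (simp add: algebra_simps)

lemma borel_measurable_radon:
  assumes "s \<in> borel_measurable lborel"
  shows "(\<lambda>t. radon s t \<theta>) \<in> borel_measurable borel"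
proof -
  have "s \<in> borel_measurable (borel \<Otimes>\<^sub>M borel)"
    using assms by (simp add: borel_prod)
  then have "(\<lambda>(t, u). s (t * cos \<theta> - u * sin \<theta>, t * sin \<theta> + u * cos \<theta>))
      \<in> borel_measurable (borel \<Otimes>\<^sub>M lborel)"
    by measurable
  then show ?thesis
    unfolding radon_def by (intro lborel.borel_measurable_lebesgue_integral) simp
qed

definition rscdt_mapped :: "image \<Rightarrow> image \<Rightarrow> family \<Rightarrow> real \<Rightarrow> scdt_val" where
  "rscdt_mapped r s K = (\<lambda>\<theta>. if \<theta> \<in> {0..pi} then scdt_mapped (K \<theta>) (\<lambda>t. radon r t \<theta>) (\<lambda>t. radon s t \<theta>)
                           else ((\<lambda>_. 0), 0, (\<lambda>_. 0), 0))"

lemma rscdt_comb_rscdt_mapped: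
  "rscdt_comb l (rscdt_mapped r s K1) (rscdt_mapped r s K2)
     = rscdt_mapped r s (\<lambda>\<theta> t. l * K1 \<theta> t + (1 - l) * K2 \<theta> t)"
  by (simp add: rscdt_comb_def rscdt_mapped_def scdt_comb_scdt_mapped fun_eq_iff)
    (simp add: scdt_comb_def)

lemma radon_phi_g:
  assumes "\<exists>s. integrable lborel s \<and> (\<forall>\<theta>\<in>{0..pi}. \<forall>t. radon s t \<theta> = radon_act g \<phi> t \<theta>)"
    and "\<theta> \<in> {0..pi}"
  shows "radon (phi_g \<phi> g) t \<theta> = deriv (g \<theta>) t * radon \<phi> (g \<theta> t) \<theta>"
  using someI_ex[OF assms(1)] assms(2) by (simp add: phi_g_def radon_inv_def radon_act_def)

lemma RSCDT_phi_g:
  assumes g: "g \<in> GR" and \<phi>: "integrable lborel \<phi>"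
    and inv_defined: "\<exists>s. integrable lborel s \<and> (\<forall>\<theta>\<in>{0..pi}. \<forall>t. radon s t \<theta> = radon_act g \<phi> t \<theta>)"
  shows "RSCDT r (phi_g \<phi> g) = rscdt_mapped r \<phi> (fam_inv g)"
proof
  fix \<theta>
  show "RSCDT r (phi_g \<phi> g) \<theta> = rscdt_mapped r \<phi> (fam_inv g) \<theta>"
  proof (cases "\<theta> \<in> {0..pi}")
    case True
    then have G: "strict_mono (g \<theta>)" "surj (g \<theta>)" "\<And>t. g \<theta> differentiable (at t)"
      using g by (auto simp: GR_def bij_is_surj)
    have "RSCDT r (phi_g \<phi> g) \<theta>
        = SCDT (\<lambda>t. radon r t \<theta>) (\<lambda>t. deriv (g \<theta>) t * radon \<phi> (g \<theta> t) \<theta>)"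
      using True radon_phi_g[OF inv_defined True] by (simp add: RSCDT_def)
    also have "\<dots> = scdt_mapped (inv (g \<theta>)) (\<lambda>t. radon r t \<theta>) (\<lambda>t. radon \<phi> t \<theta>)"
      using SCDT_deriv_comp[OF G borel_measurable_radon] \<phi> by (simp add: borel_measurable_integrable)
    finally show ?thesis
      using True by (simp add: rscdt_mapped_def fam_inv_def)
  qed (auto simp: RSCDT_def rscdt_mapped_def)
qed

lemma fam_inv_fam_inv:
  assumes "g \<in> GR"
  shows "fam_inv (fam_inv g) = g"
proof -
  have "bij (g \<theta>)" for \<theta>
    using assms by (cases "\<theta> \<in> {0..pi}") (auto simp: GR_def)
  then show ?thesis
    by (simp add: fun_eq_iff fam_inv_def inv_inv_eq)
qed

lemma fam_inv_image_convex_subgroup: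
  assumes "convex_subgroup H"
  shows "fam_inv ` H = H"
proof -
  have "H \<subseteq> GR" "\<And>g. g \<in> H \<Longrightarrow> fam_inv g \<in> H"
    using assms by (simp_all add: convex_subgroup_def)
  then show ?thesis
    using fam_inv_fam_inv by (force simp: image_iff)
qed

theorem mainTheorem4:
  fixes r \<phi> :: image and H :: "family set"
  assumes r_pos: "\<And>x. r x > 0"
    and r_int: "integrable lborel r"
    and phi_int: "integrable lborel \<phi>"
    and H: "convex_subgroup H"
    and inv_defined: "\<And>g. g \<in> H \<Longrightarrow> \<exists>s. integrable lborel s \<and>
                         (\<forall>\<theta>\<in>{0..pi}. \<forall>t. radon s t \<theta> = radon_act g \<phi> t \<theta>)"
  shows "rscdt_convex {RSCDT r s | s. s \<in> model_set \<phi> H}"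
proof -
  have "H \<subseteq> GR"
    using H by (simp add: convex_subgroup_def)
  have "{RSCDT r s | s. s \<in> model_set \<phi> H} = (\<lambda>g. RSCDT r (phi_g \<phi> g)) ` H"
    by (auto simp: model_set_def)
  also have "\<dots> = rscdt_mapped r \<phi> ` fam_inv ` H"
    using \<open>H \<subseteq> GR\<close> RSCDT_phi_g[OF _ phi_int inv_defined] by (simp add: image_image subset_iff)
  also have "\<dots> = rscdt_mapped r \<phi> ` H"
    using fam_inv_image_convex_subgroup[OF H] by simp
  finally have image: "{RSCDT r s | s. s \<in> model_set \<phi> H} = rscdt_mapped r \<phi> ` H" .
  have "(\<lambda>\<theta> t. l * k1 \<theta> t + (1 - l) * k2 \<theta> t) \<in> H" if "k1 \<in> H" "k2 \<in> H" "l \<in> {0..1}" for k1 k2 l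
    using H that by (simp add: convex_subgroup_def)
  then show ?thesis
    unfolding rscdt_convex_def image by (auto simp: rscdt_comb_rscdt_mapped)
qed

end
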